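(* Let $q$ be a prime power and $\ell$ an odd prime dividing $q-1$. For an integer $n \ge 1$ let $N_q(n)$ denote the number of monic irreducible polynomials of degree $n$ in $\mathbb{F}_q[x]$. Then for every integer $t \ge 0$, $v_\ell(N_q(2^t\ell)) = v_\ell(q-1) - 1$.
   Context: For a prime $\ell$ and nonzero integer $n$, $v_\ell(n)$ is the exponent of the highest power of $\ell$ dividing $n$. *)

theory Defs
  imports "HOL-Computational_Algebra.Computational_Algebra"
begin

definition num_monic_irred :: "'a::{finite,field} itself \<Rightarrow> nat \<Rightarrow> nat" where
  "num_monic_irred _ n =
     card {p :: 'a poly. lead_coeff p = 1 \<and> irreducible p \<and> degree p = n}"

end

theory Submission
  imports Defs "HOL-Number_Theory.Cong"
begin

(* Weighting each monic f of degree n by deg f, and splitting deg f over the powers p^j of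
   monic irreducibles dividing f, gives n q^n = sum_{k<=n} q^(n-k) sum_{d|k} d N_q(d);
   subtracting q times the same identity for n - 1 yields Gauss' formula
   sum_{d|n} d N_q(d) = q^n.  The divisors of 2^t l are the 2^i and the 2^i l, so telescoping
   gives n N_q(n) = q^l - q for t = 0 and n N_q(n) = (Q^l - Q) (Q^l + Q - 1) with
   Q = q^(2^(t-1)) for t > 0.  Since q = 1 mod l, the factor Q^l + Q - 1 is prime to l and
   Q^l - Q = Q (Q^(l-1) - 1), while v_l(q^m - 1) = v_l(q - 1) whenever l does not divide m
   (the geometric sum is congruent to m).  Hence v_l(n N_q(n)) = v_l(q - 1), and v_l(n) = 1. *)

lemma sum_divisors_eq_sum_multiples:
  fixes h :: "nat \<Rightarrow> nat \<Rightarrow> 'b::comm_monoid_add"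
  shows "(\<Sum>k=1..n. \<Sum>d | d dvd k. h d k) = (\<Sum>d=1..n. \<Sum>j=1..n div d. h d (d * j))"
proof -
  have divisor_bounds: "1 \<le> d \<and> d \<le> k" if "d dvd k" "1 \<le> k" for d k :: nat
    using that by (auto intro: dvd_imp_le dvd_pos_nat)
  have "(\<Sum>k=1..n. \<Sum>d | d dvd k. h d k) = (\<Sum>(k, d)\<in>(SIGMA k:{1..n}. {d. d dvd k}). h d k)"
    by (rule sum.Sigma) auto
  also have "\<dots> = (\<Sum>(d, j)\<in>(SIGMA d:{1..n}. {1..n div d}). h d (d * j))"
    by (rule sum.reindex_bij_witness[of _ "\<lambda>(d, j). (d * j, d)" "\<lambda>(k, d). (d, k div d)"])
      (auto simp: div_le_mono less_eq_div_iff_mult_less_eq mult.commute dest: divisor_bounds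
          intro: order.trans[OF mult_le_mono2])
  also have "\<dots> = (\<Sum>d=1..n. \<Sum>j=1..n div d. h d (d * j))"
    by (rule sum.Sigma[symmetric]) auto
  finally show ?thesis .
qed

lemma eq_power_if_convolution_identity:
  fixes q :: nat and S :: "nat \<Rightarrow> nat"
  assumes conv: "\<And>n. n * q ^ n = (\<Sum>k=1..n. q ^ (n - k) * S k)" and "n \<ge> 1"
  shows "S n = q ^ n"
proof -
  obtain m where n: "n = Suc m" using \<open>n \<ge> 1\<close> by (cases n) auto
  have "(\<Sum>k=1..Suc m. q ^ (Suc m - k) * S k) = S (Suc m) + q * (\<Sum>k=1..m. q ^ (m - k) * S k)"
    by (simp add: sum_distrib_left Suc_diff_le mult.assoc)
  then have "Suc m * q ^ Suc m = S (Suc m) + q * (m * q ^ m)"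
    by (simp only: conv)
  then show ?thesis by (simp add: n)
qed

definition monic_polys :: "nat \<Rightarrow> 'a::{zero,one} poly set" where
  "monic_polys n = {p. lead_coeff p = 1 \<and> degree p = n}"

lemma monic_polys_Suc:
  "monic_polys (Suc n)
     = (\<lambda>(c, p). pCons c p) ` (UNIV \<times> (monic_polys n :: 'a::zero_neq_one poly set))"
proof (intro equalityI subsetI)
  fix f :: "'a poly" assume f: "f \<in> monic_polys (Suc n)"
  obtain c p where "f = pCons c p" by (cases f)
  moreover have "p \<noteq> 0" using f calculation by (auto simp: monic_polys_def)
  ultimately show "f \<in> (\<lambda>(c, p). pCons c p) ` (UNIV \<times> monic_polys n)"
    using f by (auto simp: monic_polys_def)
qed (auto simp: monic_polys_def)

lemma card_monic_polys:
  "card (monic_polys n :: 'a::{finite,comm_semiring_1} poly set) = card (UNIV :: 'a set) ^ n"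
proof (induction n)
  case 0
  have "monic_polys 0 = {1 :: 'a poly}"
    by (auto simp: monic_polys_def elim: degree_eq_zeroE)
  then show ?case by simp
next
  case (Suc n)
  have "inj_on (\<lambda>(c, p). pCons c p) (UNIV \<times> (monic_polys n :: 'a poly set))"
    by (auto simp: inj_on_def)
  then show ?case
    using Suc by (simp add: monic_polys_Suc card_image card_cartesian_product)
qed

lemma finite_monic_polys: "finite (monic_polys n :: 'a::{finite,comm_semiring_1} poly set)"
  by (rule card_ge_0_finite) (simp add: card_monic_polys card_gt_0_iff)

lemma mult_monic_in_monic_polys_iff:
  fixes g h :: "'a::idom poly"
  assumes "lead_coeff g = 1" "degree g \<le> n"
  shows "g * h \<in> monic_polys n \<longleftrightarrow> h \<in> monic_polys (n - degree g)"
proof (cases "h = 0")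
  case True
  then show ?thesis
    by (simp add: monic_polys_def)
next
  case False
  moreover from assms have "g \<noteq> 0"
    by auto
  ultimately have "degree (g * h) = degree g + degree h"
    by (simp add: degree_mult_eq)
  moreover have "lead_coeff (g * h) = lead_coeff h"
    using lead_coeff_mult[of g h] assms(1) by simp
  ultimately show ?thesis
    using assms unfolding monic_polys_def mem_Collect_eq by auto
qed

lemma card_monic_multiples:
  fixes g :: "'a::{finite,idom} poly"
  assumes g: "lead_coeff g = 1" "degree g \<le> n"
  shows "card {f \<in> monic_polys n. g dvd f} = card (UNIV :: 'a set) ^ (n - degree g)"
proof -
  have "{f \<in> monic_polys n. g dvd f} = (\<lambda>h. g * h) ` monic_polys (n - degree g)"
    using mult_monic_in_monic_polys_iff[OF g] by (auto simp: dvd_def)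
  moreover have "inj_on (\<lambda>h. g * h) (monic_polys (n - degree g))"
    using g by (auto simp: inj_on_def)
  ultimately show ?thesis
    by (simp add: card_image card_monic_polys)
qed

(* In a factorial semiring this is multiplicity p x; polynomials over an arbitrary field are
   not an instance of that class, so multiplicity is not available for them. *)
definition power_dvd_count :: "'a::comm_semiring_1 \<Rightarrow> 'a \<Rightarrow> nat" where
  "power_dvd_count p x = card {j. 0 < j \<and> p ^ j dvd x}"

lemma power_dvd_count_one:
  assumes "\<not> is_unit p"
  shows "power_dvd_count p 1 = 0"
proof -
  have "\<not> p ^ j dvd 1" if "0 < j" for j
    using assms that dvd_power[of j p] dvd_trans by blast
  then have "{j. 0 < j \<and> p ^ j dvd 1} = {}"
    by blast
  then show ?thesis
    by (simp only: power_dvd_count_def card.empty)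
qed

lemma power_dvd_count_mult_other:
  fixes p q x :: "'a::algebraic_semidom"
  assumes "prime_elem q" "\<not> q dvd p"
  shows "power_dvd_count q (p * x) = power_dvd_count q x"
proof -
  have "q ^ j dvd p * x \<longleftrightarrow> q ^ j dvd x" if "0 < j" for j
    using assms that prime_power_dvd_multD dvd_mult by blast
  then show ?thesis
    unfolding power_dvd_count_def by (metis (lifting))
qed

lemma power_dvd_imp_degree_le:
  fixes p f :: "'a::idom poly"
  assumes "p ^ j dvd f" "f \<noteq> 0"
  shows "j * degree p \<le> degree f"
  using dvd_imp_degree_le[OF assms] by (cases "p = 0") (simp_all add: degree_power_eq)

lemma power_dvd_count_mult_self:
  fixes p x :: "'a::idom poly"
  assumes "degree p > 0" "x \<noteq> 0"
  shows "power_dvd_count p (p * x) = Suc (power_dvd_count p x)"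
proof -
  define E where "E = {j. 0 < j \<and> p ^ j dvd x}"
  have "E \<subseteq> {..degree x}"
  proof
    fix j assume "j \<in> E"
    have "j \<le> j * degree p"
      using assms(1) by simp
    also have "\<dots> \<le> degree x"
      using \<open>j \<in> E\<close> assms(2) by (simp add: E_def power_dvd_imp_degree_le)
    finally show "j \<in> {..degree x}"
      by simp
  qed
  then have "finite E"
    by (rule finite_subset) simp
  have "p \<noteq> 0"
    using assms by auto
  then have "{j. 0 < j \<and> p ^ j dvd p * x} = insert 1 (Suc ` E)"
    by (auto simp: E_def image_iff gr0_conv_Suc)
  moreover have "1 \<notin> Suc ` E"
    by (auto simp: E_def)
  ultimately show ?thesis
    using \<open>finite E\<close> by (simp add: power_dvd_count_def E_def[symmetric] card_image)
qed

lemma monic_irreducible_factor: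
  fixes f :: "'a::field poly"
  assumes "degree f > 0"
  obtains p where "lead_coeff p = 1" "irreducible p" "p dvd f"
proof -
  have "\<exists>p. lead_coeff p = 1 \<and> irreducible p \<and> p dvd f"
    using assms
  proof (induction "degree f" arbitrary: f rule: less_induct)
    case less
    then have "f \<noteq> 0"
      by auto
    with less.prems have "\<not> is_unit f"
      by (simp add: is_unit_iff_degree)
    show ?case
    proof (cases "irreducible f")
      case True
      let ?c = "inverse (lead_coeff f)"
      have "is_unit [:?c:]"
        using \<open>f \<noteq> 0\<close> by (simp add: is_unit_const_poly_iff dvd_field_iff)
      then have "irreducible (smult ?c f)"
        using True irreducible_mult_unit_left[of "[:?c:]" f] by simp
      moreover have "lead_coeff (smult ?c f) = 1" "smult ?c f dvd f"
        using \<open>f \<noteq> 0\<close> by (simp_all add: smult_dvd_iff)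
      ultimately show ?thesis
        by blast
    next
      case False
      with \<open>f \<noteq> 0\<close> \<open>\<not> is_unit f\<close>
      obtain a b where f: "f = a * b" "\<not> is_unit a" "\<not> is_unit b"
        by (auto simp: irreducible_def)
      with \<open>f \<noteq> 0\<close> have "degree a > 0" "degree b > 0"
        by (auto simp: is_unit_iff_degree)
      with f \<open>f \<noteq> 0\<close> have "degree a < degree f"
        by (simp add: degree_mult_eq)
      with less.hyps \<open>degree a > 0\<close> f(1) show ?thesis
        by (meson dvd_mult2)
    qed
  qed
  with that show ?thesis
    by blast
qed

lemma irreducible_imp_degree_pos:
  fixes p :: "'a::field poly"
  assumes "irreducible p"
  shows "degree p > 0"
  using assms irreducible_not_unit[OF assms] is_unit_iff_degree[of p] by (cases "p = 0") auto

lemma monic_irreducible_dvd_imp_eq: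
  fixes p q :: "'a::field poly"
  assumes "lead_coeff p = 1" "irreducible p" "lead_coeff q = 1" "irreducible q" "q dvd p"
  shows "q = p"
proof -
  from \<open>q dvd p\<close> obtain r where p: "p = q * r" ..
  with assms have "is_unit r"
    by (auto dest: irreducibleD irreducible_not_unit)
  then obtain c where "r = [:c:]"
    by (auto simp: is_unit_poly_iff)
  moreover have "lead_coeff r = 1"
    using assms by (simp add: p lead_coeff_mult)
  ultimately show ?thesis
    using p by simp
qed

lemma power_dvd_count_mult_monic_irreducible:
  fixes p q g :: "'a::field poly"
  assumes "lead_coeff p = 1" "irreducible p" "lead_coeff q = 1" "irreducible q" "g \<noteq> 0"
  shows "power_dvd_count q (p * g) = power_dvd_count q g + of_bool (q = p)"
proof (cases "q = p")
  case True
  then show ?thesis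
    using assms by (simp add: power_dvd_count_mult_self irreducible_imp_degree_pos)
next
  case False
  with assms have "\<not> q dvd p"
    using monic_irreducible_dvd_imp_eq by blast
  with False assms show ?thesis
    by (simp add: power_dvd_count_mult_other field_poly_irreducible_imp_prime)
qed

lemma degree_eq_sum_power_dvd_count:
  fixes f :: "'a::field poly" and P :: "'a poly set"
  assumes "finite P" and P: "\<And>p. p \<in> P \<Longrightarrow> lead_coeff p = 1 \<and> irreducible p"
    and "lead_coeff f = 1"
    and "\<And>p. lead_coeff p = 1 \<Longrightarrow> irreducible p \<Longrightarrow> p dvd f \<Longrightarrow> p \<in> P"
  shows "degree f = (\<Sum>p\<in>P. power_dvd_count p f * degree p)"
  using assms(3,4)
proof (induction "degree f" arbitrary: f rule: less_induct)
  case less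
  show ?case
  proof (cases "degree f = 0")
    case True
    with \<open>lead_coeff f = 1\<close> have "f = 1"
      by (auto elim: degree_eq_zeroE)
    then show ?thesis
      using P by (simp add: power_dvd_count_one irreducible_not_unit)
  next
    case False
    then obtain p where p: "lead_coeff p = 1" "irreducible p" "p dvd f"
      by (blast elim: monic_irreducible_factor)
    from \<open>p dvd f\<close> obtain g where f: "f = p * g" ..
    have "p \<noteq> 0" "g \<noteq> 0"
      using \<open>lead_coeff f = 1\<close> f by auto
    have "lead_coeff g = 1"
      using \<open>lead_coeff f = 1\<close> p(1) by (simp only: f lead_coeff_mult) simp
    have "degree p > 0"
      using p(2) by (rule irreducible_imp_degree_pos)
    have deg_f: "degree f = degree p + degree g"
      using \<open>p \<noteq> 0\<close> \<open>g \<noteq> 0\<close> by (simp add: f degree_mult_eq)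
    have "degree g < degree f"
      using deg_f \<open>degree p > 0\<close> by simp
    moreover have "q \<in> P" if "lead_coeff q = 1" "irreducible q" "q dvd g" for q
      using less.prems(2) that by (simp add: f)
    ultimately have "degree g = (\<Sum>q\<in>P. power_dvd_count q g * degree q)"
      using \<open>lead_coeff g = 1\<close> by (intro less.hyps)
    moreover have "power_dvd_count q f = power_dvd_count q g + of_bool (q = p)" if "q \<in> P" for q
      using P[OF that] p \<open>g \<noteq> 0\<close> by (simp add: f power_dvd_count_mult_monic_irreducible)
    moreover have "p \<in> P"
      using less.prems(2) p by blast
    ultimately show ?thesis
      using \<open>finite P\<close> by (simp add: deg_f algebra_simps sum.distrib)
  qed
qed

lemma sum_power_dvd_count_monic_polys:
  fixes p :: "'a::{finite,idom} poly"
  assumes p: "lead_coeff p = 1" "degree p > 0"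
  shows "(\<Sum>f\<in>monic_polys n. power_dvd_count p f)
           = (\<Sum>j=1..n div degree p. card (UNIV :: 'a set) ^ (n - degree p * j))"
proof -
  have "p \<noteq> 0"
    using p by auto
  have count: "power_dvd_count p f = (\<Sum>j=1..n div degree p. of_bool (p ^ j dvd f))"
    if "f \<in> monic_polys n" for f
  proof -
    have "f \<noteq> 0" "degree f = n"
      using that by (auto simp: monic_polys_def)
    then have "{j. 0 < j \<and> p ^ j dvd f} = {1..n div degree p} \<inter> {j. p ^ j dvd f}"
      using p power_dvd_imp_degree_le[of p _ f]
      by (auto simp: less_eq_div_iff_mult_less_eq mult.commute)
    then show ?thesis
      by (simp add: power_dvd_count_def)
  qed
  have "(\<Sum>f\<in>monic_polys n. power_dvd_count p f)
          = (\<Sum>f\<in>monic_polys n. \<Sum>j=1..n div degree p. of_bool (p ^ j dvd f))"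
    by (rule sum.cong) (simp_all only: count)
  also have "\<dots> = (\<Sum>j=1..n div degree p. \<Sum>f\<in>monic_polys n. of_bool (p ^ j dvd f))"
    by (rule sum.swap)
  also have "\<dots> = (\<Sum>j=1..n div degree p. card {f \<in> monic_polys n. p ^ j dvd f})"
    by (simp add: finite_monic_polys Int_def)
  also have "\<dots> = (\<Sum>j=1..n div degree p. card (UNIV :: 'a set) ^ (n - degree p * j))"
  proof (rule sum.cong[OF refl])
    fix j assume "j \<in> {1..n div degree p}"
    then have "degree (p ^ j) \<le> n"
      using \<open>p \<noteq> 0\<close> p(2) by (simp add: degree_power_eq less_eq_div_iff_mult_less_eq)
    moreover have "lead_coeff (p ^ j) = 1"
      using p(1) by (simp add: lead_coeff_power)
    ultimately show
      "card {f \<in> monic_polys n. p ^ j dvd f} = card (UNIV :: 'a set) ^ (n - degree p * j)"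
      using \<open>p \<noteq> 0\<close> by (simp add: card_monic_multiples degree_power_eq mult.commute)
  qed
  finally show ?thesis .
qed

definition monic_irreducibles :: "nat \<Rightarrow> 'a::comm_semiring_1 poly set" where
  "monic_irreducibles d = {p. lead_coeff p = 1 \<and> irreducible p \<and> degree p = d}"

lemma finite_monic_irreducibles:
  "finite (monic_irreducibles d :: 'a::{finite,comm_semiring_1} poly set)"
  by (rule finite_subset[OF _ finite_monic_polys[of d]])
    (auto simp: monic_irreducibles_def monic_polys_def)

lemma num_monic_irred_eq_card:
  "num_monic_irred TYPE('a::{finite,field}) d = card (monic_irreducibles d :: 'a poly set)"
  by (simp add: num_monic_irred_def monic_irreducibles_def)

lemma total_degree_monic_polys:
  "n * card (UNIV :: 'a::{finite,field} set) ^ n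
     = (\<Sum>d=1..n. \<Sum>p\<in>(monic_irreducibles d :: 'a poly set).
          d * (\<Sum>f\<in>monic_polys n. power_dvd_count p f))"
proof -
  define P where "P = (\<Union>d\<in>{1..n}. monic_irreducibles d :: 'a poly set)"
  have "finite P"
    by (simp add: P_def finite_monic_irreducibles)
  have P_monic_irreducible: "lead_coeff p = 1 \<and> irreducible p" if "p \<in> P" for p
    using that by (auto simp: P_def monic_irreducibles_def)
  have "n * card (UNIV :: 'a set) ^ n = (\<Sum>f \<in> (monic_polys n :: 'a poly set). n)"
    by (simp add: card_monic_polys)
  also have "\<dots> = (\<Sum>f\<in>monic_polys n. degree (f :: 'a poly))"
    by (rule sum.cong) (simp_all add: monic_polys_def)
  also have "\<dots> = (\<Sum>f\<in>monic_polys n. \<Sum>p\<in>P. power_dvd_count p f * degree p)"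
  proof (rule sum.cong[OF refl], rule degree_eq_sum_power_dvd_count)
    fix f p :: "'a poly"
    assume f: "f \<in> monic_polys n" and p: "lead_coeff p = 1" "irreducible p" "p dvd f"
    then have "f \<noteq> 0" "degree f = n"
      by (auto simp: monic_polys_def)
    with p(3) have "degree p \<le> n"
      using dvd_imp_degree_le by blast
    with p irreducible_imp_degree_pos[OF p(2)] show "p \<in> P"
      by (auto simp: P_def monic_irreducibles_def)
  qed (use \<open>finite P\<close> P_monic_irreducible in \<open>auto simp: monic_polys_def\<close>)
  also have "\<dots> = (\<Sum>p\<in>P. degree p * (\<Sum>f\<in>monic_polys n. power_dvd_count p f))"
    by (subst sum.swap) (simp add: sum_distrib_left mult.commute)
  also have "\<dots> = (\<Sum>d=1..n. \<Sum>p\<in>(monic_irreducibles d :: 'a poly set).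
                        degree p * (\<Sum>f\<in>monic_polys n. power_dvd_count p f))"
    unfolding P_def
    by (rule sum.UNION_disjoint)
      (simp_all add: finite_monic_irreducibles, auto simp: monic_irreducibles_def)
  also have "\<dots> = (\<Sum>d=1..n. \<Sum>p\<in>(monic_irreducibles d :: 'a poly set).
                        d * (\<Sum>f\<in>monic_polys n. power_dvd_count p f))"
    by (intro sum.cong refl) (simp add: monic_irreducibles_def)
  finally show ?thesis .
qed

lemma num_monic_irred_convolution_identity:
  fixes n :: nat
  defines "q \<equiv> card (UNIV :: 'a::{finite,field} set)"
  shows "n * q ^ n = (\<Sum>k=1..n. q ^ (n - k) * (\<Sum>d | d dvd k. d * num_monic_irred TYPE('a) d))"
proof -
  define N where "N d = num_monic_irred TYPE('a) d" for d
  have "n * q ^ n = (\<Sum>d=1..n. \<Sum>p\<in>(monic_irreducibles d :: 'a poly set).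
                       d * (\<Sum>j=1..n div d. q ^ (n - d * j)))"
    unfolding q_def total_degree_monic_polys
    by (intro sum.cong refl)
      (auto simp: monic_irreducibles_def sum_power_dvd_count_monic_polys irreducible_imp_degree_pos)
  also have "\<dots> = (\<Sum>d=1..n. \<Sum>j=1..n div d. d * N d * q ^ (n - d * j))"
    by (simp add: N_def num_monic_irred_eq_card sum_distrib_left mult_ac)
  also have "\<dots> = (\<Sum>k=1..n. \<Sum>d | d dvd k. d * N d * q ^ (n - k))"
    using sum_divisors_eq_sum_multiples[of "\<lambda>d k. d * N d * q ^ (n - k)" n] by simp
  also have "\<dots> = (\<Sum>k=1..n. q ^ (n - k) * (\<Sum>d | d dvd k. d * N d))"
    by (simp add: sum_distrib_left mult.commute)
  finally show ?thesis
    by (simp add: N_def)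
qed

theorem sum_divisors_num_monic_irred:
  assumes "k \<ge> 1"
  shows "(\<Sum>d | d dvd k. d * num_monic_irred TYPE('a::{finite,field}) d) = card (UNIV :: 'a set) ^ k"
  using num_monic_irred_convolution_identity[where 'a = 'a] assms
  by (rule eq_power_if_convolution_identity)

lemma odd_prime_not_dvd_pow2:
  fixes l :: nat
  assumes "prime l" "odd l"
  shows "\<not> l dvd 2 ^ i"
  using assms prime_dvd_power_nat primes_dvd_imp_eq two_is_prime_nat by blast

lemma sum_divisors_pow2_times_odd_prime:
  fixes l t :: nat and g :: "nat \<Rightarrow> 'b::comm_monoid_add"
  assumes l: "prime l" "odd l"
  shows "(\<Sum>d | d dvd 2 ^ t * l. g d) = (\<Sum>d | d dvd 2 ^ t. g d) + (\<Sum>i\<le>t. g (2 ^ i * l))"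
proof -
  have "{d. d dvd 2 ^ t * l} = {d. d dvd 2 ^ t} \<union> (\<lambda>i. 2 ^ i * l) ` {..t}"
  proof (intro equalityI subsetI)
    fix d assume "d \<in> {d. d dvd 2 ^ t * l}"
    then have d: "d dvd 2 ^ t * l" by simp
    show "d \<in> {d. d dvd 2 ^ t} \<union> (\<lambda>i. 2 ^ i * l) ` {..t}"
    proof (cases "l dvd d")
      case True
      then obtain e where "d = l * e" ..
      with d l have "e dvd 2 ^ t" by (simp add: prime_gt_0_nat)
      then obtain i where "i \<le> t" "e = 2 ^ i"
        using divides_primepow_nat[OF two_is_prime_nat] by blast
      with \<open>d = l * e\<close> show ?thesis by (auto simp: mult.commute)
    next
      case False
      then have "coprime d l" using l by (metis coprime_commute prime_imp_coprime)
      with d show ?thesis by (simp add: coprime_dvd_mult_left_iff)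
    qed
  qed (auto intro: mult_dvd_mono le_imp_power_dvd)
  moreover have "{d. d dvd 2 ^ t} \<inter> (\<lambda>i. 2 ^ i * l) ` {..t} = {}"
    using odd_prime_not_dvd_pow2[OF l] by (auto dest: dvd_mult_right)
  moreover have "inj_on (\<lambda>i. 2 ^ i * l) {..t}"
    using l by (auto simp: inj_on_def prime_gt_0_nat)
  ultimately show ?thesis
    by (simp add: sum.union_disjoint sum.reindex)
qed

lemma multiplicity_power_minus_one:
  fixes l q m :: nat
  assumes l: "prime l" and q: "[q = 1] (mod l)" "q > 0" and m: "\<not> l dvd m"
  shows "multiplicity l (q ^ m - 1) = multiplicity l (q - 1)"
proof -
  have "int (q ^ m - 1) = int ((\<Sum>i<m. q ^ i) * (q - 1))"
    using q(2) by (simp add: power_diff_1_eq mult.commute)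
  then have geometric: "q ^ m - 1 = (\<Sum>i<m. q ^ i) * (q - 1)"
    by (simp only: of_nat_eq_iff)
  have "[(\<Sum>i<m. q ^ i) = (\<Sum>i<m. 1)] (mod l)"
    using q(1) by (intro cong_sum) (metis cong_pow power_one)
  then have "\<not> l dvd (\<Sum>i<m. q ^ i)"
    using m by (simp add: cong_dvd_iff)
  then show ?thesis
    unfolding geometric using l by (simp add: multiplicity_prime_elem_times_other)
qed

lemma multiplicity_power_prime_minus_self:
  fixes l q :: nat
  assumes l: "prime l" and q: "[q = 1] (mod l)" "q > 0"
  shows "multiplicity l (q ^ l - q) = multiplicity l (q - 1)"
proof -
  obtain k where k: "l = Suc k" "0 < k"
    using prime_gt_1_nat[OF l] by (cases l) auto
  then have "\<not> l dvd k"
    by (auto dest: dvd_imp_le)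
  moreover have "\<not> l dvd q"
    using cong_dvd_iff[OF q(1)] l by (simp add: prime_nat_iff)
  moreover have "q ^ l - q = q * (q ^ k - 1)"
    by (simp add: k right_diff_distrib')
  ultimately show ?thesis
    using l multiplicity_power_minus_one[OF l q \<open>\<not> l dvd k\<close>]
    by (simp add: multiplicity_prime_elem_times_other)
qed

lemma weighted_count_at_pow2_times_odd_prime:
  fixes q l s :: nat and N :: "nat \<Rightarrow> nat"
  assumes l: "prime l" "odd l" and "q > 0"
    and divisor_sum: "\<And>k. k \<ge> 1 \<Longrightarrow> (\<Sum>d | d dvd k. d * N d) = q ^ k"
  defines "Q \<equiv> q ^ 2 ^ s"
  shows "l * N l = q ^ l - q"
    and "2 ^ Suc s * l * N (2 ^ Suc s * l) = (Q ^ l - Q) * (Q ^ l + Q - 1)"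
proof -
  define B where "B s = (\<Sum>i\<le>s. 2 ^ i * l * N (2 ^ i * l))" for s
  have B: "q ^ (2 ^ s * l) = q ^ 2 ^ s + B s" for s
    using divisor_sum[of "2 ^ s * l"] divisor_sum[of "2 ^ s"] prime_gt_0_nat[OF l(1)]
      sum_divisors_pow2_times_odd_prime[OF l, of "\<lambda>d. d * N d" s]
    by (simp add: B_def mult.assoc)
  from B[of 0] show "l * N l = q ^ l - q"
    by (simp add: B_def)
  define X where "X = 2 ^ Suc s * l * N (2 ^ Suc s * l)"
  have "B (Suc s) = B s + X"
    by (simp add: B_def X_def)
  then have "X + Q ^ l + Q ^ 2 = Q ^ (2 * l) + Q"
    using B[of s] B[of "Suc s"] by (simp add: Q_def power_mult[symmetric] mult_ac)
  then have "int (X + Q ^ l + Q ^ 2) = int (Q ^ (2 * l) + Q)"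
    by (rule arg_cong)
  then have "int X = int Q ^ (2 * l) - int Q ^ 2 - (int Q ^ l - int Q)"
    by simp
  also have "\<dots> = (int Q ^ l - int Q) * (int Q ^ l + int Q - 1)"
    by (simp add: algebra_simps power2_eq_square flip: power_add mult_2)
  also have "\<dots> = int ((Q ^ l - Q) * (Q ^ l + Q - 1))"
  proof -
    have "0 < Q"
      using \<open>q > 0\<close> by (simp add: Q_def)
    moreover have "Q \<le> Q ^ l"
      using calculation prime_gt_0_nat[OF l(1)] by (simp add: self_le_power)
    ultimately show ?thesis
      by (simp add: Suc_le_eq)
  qed
  finally show "2 ^ Suc s * l * N (2 ^ Suc s * l) = (Q ^ l - Q) * (Q ^ l + Q - 1)"
    by (simp only: X_def of_nat_eq_iff)
qed

lemma multiplicity_weighted_count_at_pow2_times_odd_prime: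
  fixes q l t :: nat and N :: "nat \<Rightarrow> nat"
  assumes l: "prime l" "odd l" and q: "q > 0" "[q = 1] (mod l)"
    and divisor_sum: "\<And>k. k \<ge> 1 \<Longrightarrow> (\<Sum>d | d dvd k. d * N d) = q ^ k"
  shows "multiplicity l (2 ^ t * l * N (2 ^ t * l)) = multiplicity l (q - 1)"
proof (cases t)
  case 0
  then show ?thesis
    using weighted_count_at_pow2_times_odd_prime(1)[OF l q(1) divisor_sum] q l
    by (simp add: multiplicity_power_prime_minus_self)
next
  case (Suc s)
  define Q where "Q = q ^ 2 ^ s"
  have "Q > 0" "[Q = 1] (mod l)"
    using q cong_pow[OF q(2)] by (simp_all add: Q_def)
  then have "[Q ^ l + Q = 1 + 1] (mod l)"
    by (metis cong_add cong_pow power_one)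
  then have R_cong: "[Q ^ l + Q - 1 = 1 + 1 - 1] (mod l)"
    using \<open>Q > 0\<close> by (intro cong_diff_nat) (auto simp: Suc_le_eq)
  have "\<not> l dvd Q ^ l + Q - 1"
    using cong_dvd_iff[OF R_cong] l(1) by (simp add: prime_nat_iff)
  moreover have "2 ^ t * l * N (2 ^ t * l) = (Q ^ l + Q - 1) * (Q ^ l - Q)"
    using weighted_count_at_pow2_times_odd_prime(2)[OF l q(1) divisor_sum, of s]
    by (simp add: Q_def Suc mult.commute)
  moreover have "multiplicity l (Q - 1) = multiplicity l (q - 1)"
    using multiplicity_power_minus_one[OF l(1) q(2,1) odd_prime_not_dvd_pow2[OF l]]
    by (simp add: Q_def)
  ultimately show ?thesis
    using l(1) \<open>Q > 0\<close> \<open>[Q = 1] (mod l)\<close>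
    by (simp add: multiplicity_prime_elem_times_other multiplicity_power_prime_minus_self)
qed

lemma multiplicity_at_pow2_times_odd_prime:
  fixes q l t :: nat and N :: "nat \<Rightarrow> nat"
  assumes l: "prime l" "odd l" and q: "q > 1" "l dvd q - 1"
    and divisor_sum: "\<And>k. k \<ge> 1 \<Longrightarrow> (\<Sum>d | d dvd k. d * N d) = q ^ k"
  shows "multiplicity l (N (2 ^ t * l)) = multiplicity l (q - 1) - 1"
proof -
  have "[q = 1] (mod l)"
    using q by (simp add: cong_altdef_nat)
  with l q(1) divisor_sum have weighted:
    "multiplicity l (l * (2 ^ t * N (2 ^ t * l))) = multiplicity l (q - 1)"
    using multiplicity_weighted_count_at_pow2_times_odd_prime[of l q N t] by (simp add: mult_ac)
  moreover have "0 < multiplicity l (q - 1)"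
    using q l(1) multiplicity_gt_zero_iff[of "q - 1" l] by (simp add: prime_nat_iff)
  ultimately have "N (2 ^ t * l) \<noteq> 0"
    by (metis less_irrefl mult_0_right multiplicity_zero)
  then have "multiplicity l (l * (2 ^ t * N (2 ^ t * l)))
               = Suc (multiplicity l (N (2 ^ t * l)))"
    using l(1) prime_gt_1_nat[OF l(1)] multiplicity_times_same[of "2 ^ t * N (2 ^ t * l)" l]
      odd_prime_not_dvd_pow2[OF l]
    by (simp add: multiplicity_prime_elem_times_other)
  with weighted show ?thesis
    by simp
qed

theorem lemma5p2:
  fixes l t :: nat
  assumes "prime l" and "odd l" and "l dvd card (UNIV :: 'a set) - 1"
  shows "multiplicity l (num_monic_irred TYPE('a::{finite,field}) (2 ^ t * l))
           = multiplicity l (card (UNIV :: 'a set) - 1) - 1"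
proof -
  have "card {0 :: 'a, 1} \<le> card (UNIV :: 'a set)"
    by (rule card_mono) auto
  then have "card (UNIV :: 'a set) > 1"
    by simp
  with assms show ?thesis
    by (intro multiplicity_at_pow2_times_odd_prime sum_divisors_num_monic_irred)
qed

end
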